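(* Every Polish space, and every continuous domain endowed with its Scott topology, is a convergent approximation space.
   Context: Approximation relation: for a topological space $E$, an approximation relation is a binary relation $\ll$ on some topological basis $\mathcal{B}$ of $E$ such that for all $U,V,T\in\mathcal{B}$: (1) if $U\ll V$ then $V\subseteq U$; (2) if $U\subseteq T$ and $U\ll V$ then $T\ll V$; (3) for every $x\in U$ there exists $W\in\mathcal{B}$ with $x\in W$ and $U\ll W$; (4) for every sequence $(U_i)_{i\in\mathbb{N}}$ in $\mathcal{B}$ with $U_i\ll U_{i+1}$ for all $i$, $\bigcap_i U_i\neq\emptyset$. It is convergent if (4) is strengthened to (4$^+$): every such sequence is a neighborhood basis of some point of $\bigcap_i U_i$. A space is a convergent approximation space if it admits a convergent approximation relation. Domain notions: a dcpo is a poset $(D,\sqsubseteq)$ in which every nonempty directed subset has a supremum; its Scott topology has as open sets the upsets $O$ such that every directed set with supremum in $O$ meets $O$. The way-below relation: $x\ll y$ iff for every directed $S$ with $y\sqsubseteq\sqcup S$ there is $s\in S$ with $x\sqsubseteq s$. $D$ is a continuous domain if for every $x$ the set $\{z: z\ll x\}$ is directed with supremum $x$. *)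

theory Defs
  imports "HOL-Analysis.Analysis"
begin

definition topological_basis_of :: "'a topology \<Rightarrow> 'a set set \<Rightarrow> bool" where
  "topological_basis_of X \<B> \<longleftrightarrow> openin X = arbitrary union_of (\<lambda>U. U \<in> \<B>)"

definition approx_rel_axioms123 :: "'a topology \<Rightarrow> 'a set set \<Rightarrow> ('a set \<Rightarrow> 'a set \<Rightarrow> bool) \<Rightarrow> bool" where
  "approx_rel_axioms123 X \<B> R \<longleftrightarrow>
     topological_basis_of X \<B> \<and>
     (\<forall>U\<in>\<B>. \<forall>V\<in>\<B>. R U V \<longrightarrow> V \<subseteq> U) \<and>
     (\<forall>U\<in>\<B>. \<forall>V\<in>\<B>. \<forall>T\<in>\<B>. U \<subseteq> T \<and> R U V \<longrightarrow> R T V) \<and>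
     (\<forall>U\<in>\<B>. \<forall>x\<in>U. \<exists>W\<in>\<B>. x \<in> W \<and> R U W)"

definition approximation_relation :: "'a topology \<Rightarrow> 'a set set \<Rightarrow> ('a set \<Rightarrow> 'a set \<Rightarrow> bool) \<Rightarrow> bool" where
  "approximation_relation X \<B> R \<longleftrightarrow>
     approx_rel_axioms123 X \<B> R \<and>
     (\<forall>Us :: nat \<Rightarrow> 'a set. (\<forall>i. Us i \<in> \<B>) \<and> (\<forall>i. R (Us i) (Us (Suc i)))
        \<longrightarrow> (\<Inter>i. Us i) \<noteq> {})"

definition convergent_approximation_relation :: "'a topology \<Rightarrow> 'a set set \<Rightarrow> ('a set \<Rightarrow> 'a set \<Rightarrow> bool) \<Rightarrow> bool" where
  "convergent_approximation_relation X \<B> R \<longleftrightarrow>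
     approx_rel_axioms123 X \<B> R \<and>
     (\<forall>Us :: nat \<Rightarrow> 'a set. (\<forall>i. Us i \<in> \<B>) \<and> (\<forall>i. R (Us i) (Us (Suc i)))
        \<longrightarrow> (\<exists>x \<in> (\<Inter>i. Us i).
               (\<forall>i. x \<in> Us i) \<and>
               (\<forall>V. openin X V \<and> x \<in> V \<longrightarrow> (\<exists>i. Us i \<subseteq> V))))"

definition convergent_approximation_space :: "'a topology \<Rightarrow> bool" where
  "convergent_approximation_space X \<longleftrightarrow>
     (\<exists>\<B> R. convergent_approximation_relation X \<B> R)"

definition Polish_space :: "'a topology \<Rightarrow> bool" where
  "Polish_space X \<longleftrightarrow> completely_metrizable_space X \<and> separable_space X"

definition directed_set :: "'a::order set \<Rightarrow> bool" where
  "directed_set S \<longleftrightarrow> S \<noteq> {} \<and> (\<forall>x\<in>S. \<forall>y\<in>S. \<exists>z\<in>S. x \<le> z \<and> y \<le> z)"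

definition is_sup :: "'a::order set \<Rightarrow> 'a \<Rightarrow> bool" where
  "is_sup S s \<longleftrightarrow> (\<forall>x\<in>S. x \<le> s) \<and> (\<forall>u. (\<forall>x\<in>S. x \<le> u) \<longrightarrow> s \<le> u)"

text \<open>The whole type, with its order, is the poset.\<close>
definition dcpo :: "'a::order itself \<Rightarrow> bool" where
  "dcpo _ \<longleftrightarrow> (\<forall>S :: 'a set. directed_set S \<longrightarrow> (\<exists>s. is_sup S s))"

definition scott_open :: "'a::order set \<Rightarrow> bool" where
  "scott_open A \<longleftrightarrow>
     (\<forall>x y. x \<in> A \<and> x \<le> y \<longrightarrow> y \<in> A) \<and>
     (\<forall>S s. directed_set S \<and> is_sup S s \<and> s \<in> A \<longrightarrow> S \<inter> A \<noteq> {})"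

definition scott_topology :: "'a::order topology" where
  "scott_topology = topology scott_open"

definition way_below :: "'a::order \<Rightarrow> 'a \<Rightarrow> bool" where
  "way_below x y \<longleftrightarrow>
     (\<forall>S s. directed_set S \<and> is_sup S s \<and> y \<le> s \<longrightarrow> (\<exists>t\<in>S. x \<le> t))"

definition continuous_domain :: "'a::order itself \<Rightarrow> bool" where
  "continuous_domain T \<longleftrightarrow> dcpo T \<and>
     (\<forall>x::'a. directed_set {z. way_below z x} \<and> is_sup {z. way_below z x} x)"

end

theory Submission
  imports Defs
begin

text \<open>In both cases all open sets form the basis. In a complete metric space let \<open>U \<ll> V\<close>
  mean that \<open>V\<close> is nonempty, lies in a ball of radius \<open>1\<close>, has its closure inside \<open>U\<close>, and lies in
  a ball of radius \<open>(1/2)^(n+1)\<close> whenever \<open>U\<close> lies in one of radius \<open>(1/2)^n\<close>. Along a chain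
  the closures are then nested nonempty closed sets of radius at most \<open>(1/2)^n\<close>, which by
  completeness meet in a point, and the chain is a neighbourhood basis of that point.

  In a continuous domain let \<open>U \<ll> V\<close> mean that \<open>V\<close> is nonempty and lies above some point of
  \<open>U\<close>. For \<open>x \<in> U\<close> some \<open>z \<ll> x\<close> lies in \<open>U\<close>, and the set of elements way above \<open>z\<close>,
  Scott open by interpolation, gives condition (3). Along a chain the witnessing points increase;
  their supremum lies in every member, and a Scott open set containing it contains a witness, hence
  the next member of the chain.\<close>

lemma topological_basis_of_openin: "topological_basis_of X {U. openin X U}"
  unfolding topological_basis_of_def by (subst openin_topology_base_unique) auto

lemma convergent_approximation_spaceI:
  assumes "approx_rel_axioms123 X \<B> R"
    and "\<And>Us. (\<And>i. Us i \<in> \<B>) \<Longrightarrow> (\<And>i. R (Us i) (Us (Suc i))) \<Longrightarrow>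
           \<exists>x. (\<forall>i. x \<in> Us i) \<and> (\<forall>V. openin X V \<and> x \<in> V \<longrightarrow> (\<exists>i. Us i \<subseteq> V))"
  shows "convergent_approximation_space X"
  unfolding convergent_approximation_space_def convergent_approximation_relation_def
proof (intro exI[of _ \<B>] exI[of _ R] conjI allI impI)
  fix Us assume "(\<forall>i. Us i \<in> \<B>) \<and> (\<forall>i. R (Us i) (Us (Suc i)))"
  then obtain x where "\<forall>i. x \<in> Us i" "\<forall>V. openin X V \<and> x \<in> V \<longrightarrow> (\<exists>i. Us i \<subseteq> V)"
    using assms(2)[of Us] by blast
  then show "\<exists>x\<in>\<Inter>i. Us i. (\<forall>i. x \<in> Us i) \<and> (\<forall>V. openin X V \<and> x \<in> V \<longrightarrow> (\<exists>i. Us i \<subseteq> V))"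
    by blast
qed (rule assms(1))

section \<open>Complete metric spaces\<close>

context Metric_space
begin

definition in_some_ball :: "real \<Rightarrow> 'a set \<Rightarrow> bool" where
  "in_some_ball r U \<longleftrightarrow> (\<exists>a. U \<subseteq> mball a r)"

lemma in_some_ball_subset: "in_some_ball r T \<Longrightarrow> U \<subseteq> T \<Longrightarrow> in_some_ball r U"
  unfolding in_some_ball_def by blast

lemma in_some_ball_mono: "in_some_ball r U \<Longrightarrow> r \<le> s \<Longrightarrow> in_some_ball s U"
  unfolding in_some_ball_def using mball_subset_concentric by blast

lemma in_some_ball_mball: "r \<le> s \<Longrightarrow> in_some_ball s (mball x r)"
  unfolding in_some_ball_def using mball_subset_concentric by blast

lemma in_some_ball_imp_subset: "in_some_ball r U \<Longrightarrow> U \<subseteq> M"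
  unfolding in_some_ball_def by auto

lemma in_some_ball_imp_subset_mball:
  assumes "in_some_ball r U" and "z \<in> U"
  shows "U \<subseteq> mball z (2 * r)"
proof
  fix y assume "y \<in> U"
  obtain a where "U \<subseteq> mball a r" using assms(1) unfolding in_some_ball_def by blast
  with \<open>y \<in> U\<close> \<open>z \<in> U\<close> have "z \<in> mball a r" "y \<in> mball a r" by auto
  then have "z \<in> M" "y \<in> M" "d z y < 2 * r"
    using triangle[of z a y] commute[of z a] by auto
  then show "y \<in> mball z (2 * r)" by simp
qed

lemma closure_of_mball_subset_mcball: "mtopology closure_of mball x r \<subseteq> mcball x r"
  by (rule closure_of_minimal) (auto simp: mball_subset_mcball)

definition metric_approx :: "'a set \<Rightarrow> 'a set \<Rightarrow> bool" where
  "metric_approx U V \<longleftrightarrow> V \<noteq> {} \<and> mtopology closure_of V \<subseteq> U \<and> in_some_ball 1 V \<and>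
     (\<forall>n. in_some_ball ((1/2)^n) U \<longrightarrow> in_some_ball ((1/2)^Suc n) V)"

lemma metric_approx_imp_subset:
  assumes "metric_approx U V"
  shows "V \<subseteq> U"
proof -
  have "V \<subseteq> topspace mtopology"
    using assms in_some_ball_imp_subset unfolding metric_approx_def by auto
  then have "V \<subseteq> mtopology closure_of V" by (rule closure_of_subset)
  then show ?thesis using assms unfolding metric_approx_def by blast
qed

lemma metric_approx_mono_left: "metric_approx U V \<Longrightarrow> U \<subseteq> T \<Longrightarrow> metric_approx T V"
  unfolding metric_approx_def using in_some_ball_subset by blast

lemma metric_approx_mball:
  assumes "openin mtopology U" and "x \<in> U"
  shows "\<exists>r>0. metric_approx U (mball x r)"
proof -
  obtain r0 where r0: "r0 > 0" "mball x r0 \<subseteq> U"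
    using assms openin_mtopology by blast
  have "x \<in> M" using assms openin_subset by fastforce
  have approx: "metric_approx U (mball x r)"
    if "0 < r" "r \<le> r0/2" "r \<le> 1"
      and halves: "\<And>n. in_some_ball ((1/2)^n) U \<Longrightarrow> in_some_ball ((1/2)^Suc n) (mball x r)"
    for r
  proof -
    have "mtopology closure_of mball x r \<subseteq> mcball x r" by (rule closure_of_mball_subset_mcball)
    also have "\<dots> \<subseteq> mball x r0" using that r0 by (intro mcball_subset_mball_concentric) auto
    finally have "mtopology closure_of mball x r \<subseteq> U" using r0 by blast
    moreover have "mball x r \<noteq> {}" using \<open>x \<in> M\<close> \<open>0 < r\<close> by auto
    moreover have "in_some_ball 1 (mball x r)" using \<open>r \<le> 1\<close> by (rule in_some_ball_mball)
    ultimately show ?thesis unfolding metric_approx_def using halves by blast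
  qed
  show ?thesis
  proof (cases "\<forall>n. in_some_ball ((1/2)^n) U")
    case True
    define r :: real where "r = min (r0/2) 1"
    have r: "0 < r" "r \<le> r0/2" "r \<le> 1" using r0 by (auto simp: r_def)
    then have "mball x r \<subseteq> mball x r0" by (intro mball_subset_concentric) auto
    then have "mball x r \<subseteq> U" using r0 by blast
    then have "in_some_ball ((1/2)^Suc n) (mball x r)" for n using True in_some_ball_subset by blast
    then show ?thesis using approx[OF r] r(1) by blast
  next
    case False
    then obtain N where N: "\<not> in_some_ball ((1/2)^N) U" by blast
    define r :: real where "r = min (r0/2) ((1/2)^Suc N)"
    have halves: "in_some_ball ((1/2)^Suc n) (mball x r)" if "in_some_ball ((1/2)^n) U" for n
    proof -
      have "n < N"
      proof (rule ccontr)
        assume "\<not> n < N"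
        then have "(1/2::real)^n \<le> (1/2)^N" by (intro power_decreasing) auto
        with that N show False using in_some_ball_mono by blast
      qed
      then have "(1/2::real)^Suc N \<le> (1/2)^Suc n" by (intro power_decreasing) auto
      then have "r \<le> (1/2)^Suc n" unfolding r_def by (rule min.coboundedI2)
      then show ?thesis by (rule in_some_ball_mball)
    qed
    have "(1/2::real)^Suc N \<le> 1" by (rule power_le_one) auto
    then have r: "0 < r" "r \<le> r0/2" "r \<le> 1" using r0 unfolding r_def by auto
    then show ?thesis using approx[OF r halves] by blast
  qed
qed

lemma metric_approx_axioms: "approx_rel_axioms123 mtopology {U. openin mtopology U} metric_approx"
  unfolding approx_rel_axioms123_def
proof (intro conjI ballI impI)
  show "topological_basis_of mtopology {U. openin mtopology U}"
    by (rule topological_basis_of_openin)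
next
  fix U V assume "metric_approx U V"
  then show "V \<subseteq> U" by (rule metric_approx_imp_subset)
next
  fix U T V assume "U \<subseteq> T \<and> metric_approx U V"
  then show "metric_approx T V" using metric_approx_mono_left by blast
next
  fix U x assume "U \<in> {U. openin mtopology U}" and "x \<in> U"
  then have "openin mtopology U" by simp
  with \<open>x \<in> U\<close> have "x \<in> M" using openin_subset by fastforce
  obtain r where "r > 0" "metric_approx U (mball x r)"
    using metric_approx_mball[OF \<open>openin mtopology U\<close> \<open>x \<in> U\<close>] by blast
  with \<open>x \<in> M\<close> show "\<exists>W\<in>{U. openin mtopology U}. x \<in> W \<and> metric_approx U W"
    by (intro bexI[of _ "mball x r"]) auto
qed

lemma metric_approx_chain_in_some_ball:
  assumes "\<And>i. metric_approx (Us i) (Us (Suc i))"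
  shows "in_some_ball ((1/2)^i) (Us (Suc i))"
  using assms by (induction i) (simp_all add: metric_approx_def)

lemma metric_approx_chain_converges:
  assumes "mcomplete" and chain: "\<And>i. metric_approx (Us i) (Us (Suc i))"
  shows "\<exists>z. (\<forall>i. z \<in> Us i) \<and> (\<forall>V. openin mtopology V \<and> z \<in> V \<longrightarrow> (\<exists>i. Us i \<subseteq> V))"
proof -
  have small: "in_some_ball ((1/2)^n) (Us (Suc n))" for n
    using chain by (rule metric_approx_chain_in_some_ball)
  define C where "C n = mtopology closure_of Us (Suc n)" for n
  have C_subset: "C n \<subseteq> Us n" for n
    using chain[of n] unfolding C_def metric_approx_def by blast
  have subset_C: "Us (Suc n) \<subseteq> C n" for n
    using in_some_ball_imp_subset[OF small[of n]] by (simp add: C_def closure_of_subset)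
  have "\<Inter> (range C) \<noteq> {}"
  proof (rule \<open>mcomplete\<close>[unfolded mcomplete_nest, rule_format], intro conjI allI impI)
    fix n
    show "closedin mtopology (C n)" unfolding C_def by simp
    show "C n \<noteq> {}" using subset_C[of n] chain[of n] unfolding metric_approx_def by blast
  next
    show "decseq C"
      unfolding decseq_Suc_iff using C_subset subset_C by blast
  next
    fix e :: real assume "e > 0"
    then obtain n where n: "(1/2::real)^n < e" using real_arch_pow_inv[of e "1/2"] by auto
    obtain b where "Us (Suc n) \<subseteq> mball b ((1/2)^n)" using small unfolding in_some_ball_def by blast
    then have "C n \<subseteq> mtopology closure_of mball b ((1/2)^n)"
      unfolding C_def by (rule closure_of_mono)
    also have "\<dots> \<subseteq> mcball b ((1/2)^n)" by (rule closure_of_mball_subset_mcball)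
    also have "\<dots> \<subseteq> mcball b e" using n by (intro mcball_subset_concentric) simp
    finally show "\<exists>n a. C n \<subseteq> mcball a e" by blast
  qed
  then obtain z where "\<And>n. z \<in> C n" by blast
  then have z: "z \<in> Us i" for i using C_subset by blast
  have "\<exists>i. Us i \<subseteq> V" if V: "openin mtopology V" "z \<in> V" for V
  proof -
    obtain r where r: "r > 0" "mball z r \<subseteq> V" using V openin_mtopology by blast
    obtain n where n: "(1/2::real)^n < r/2" using real_arch_pow_inv[of "r/2" "1/2"] r by auto
    have "Us (Suc n) \<subseteq> mball z (2 * (1/2)^n)" using small z by (rule in_some_ball_imp_subset_mball)
    also have "\<dots> \<subseteq> mball z r" using n by (intro mball_subset_concentric) simp
    finally show ?thesis using r by blast
  qed
  then show ?thesis using z by blast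
qed

lemma mcomplete_convergent_approximation_space:
  assumes "mcomplete"
  shows "convergent_approximation_space mtopology"
proof (rule convergent_approximation_spaceI[OF metric_approx_axioms])
  fix Us :: "nat \<Rightarrow> 'a set"
  assume "\<And>i. metric_approx (Us i) (Us (Suc i))"
  with assms show "\<exists>x. (\<forall>i. x \<in> Us i) \<and> (\<forall>V. openin mtopology V \<and> x \<in> V \<longrightarrow> (\<exists>i. Us i \<subseteq> V))"
    by (rule metric_approx_chain_converges)
qed

end

section \<open>Continuous domains\<close>

lemma scott_open_upward: "scott_open U \<Longrightarrow> x \<in> U \<Longrightarrow> x \<le> y \<Longrightarrow> y \<in> U"
  unfolding scott_open_def by blast

lemma scott_open_meets_directed:
  "scott_open U \<Longrightarrow> directed_set S \<Longrightarrow> is_sup S s \<Longrightarrow> s \<in> U \<Longrightarrow> \<exists>t\<in>S. t \<in> U"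
  unfolding scott_open_def by blast

lemma istopology_scott_open: "istopology (scott_open :: 'a::order set \<Rightarrow> bool)"
  unfolding istopology_def
proof (intro conjI allI impI ballI)
  fix S T :: "'a set" assume "scott_open S" "scott_open T"
  show "scott_open (S \<inter> T)"
    unfolding scott_open_def
  proof (intro conjI allI impI)
    fix x y assume "x \<in> S \<inter> T \<and> x \<le> y"
    then show "y \<in> S \<inter> T" using \<open>scott_open S\<close> \<open>scott_open T\<close> scott_open_upward by blast
  next
    fix D s assume D: "directed_set D \<and> is_sup D s \<and> s \<in> S \<inter> T"
    then obtain t1 t2 where "t1 \<in> D \<inter> S" "t2 \<in> D \<inter> T"
      using \<open>scott_open S\<close> \<open>scott_open T\<close> scott_open_meets_directed by (metis IntD1 IntD2 IntI)
    moreover from this D obtain t where "t \<in> D" "t1 \<le> t" "t2 \<le> t"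
      unfolding directed_set_def by blast
    ultimately show "D \<inter> (S \<inter> T) \<noteq> {}"
      using \<open>scott_open S\<close> \<open>scott_open T\<close> scott_open_upward by blast
  qed
next
  fix K :: "'a set set" assume "\<forall>S\<in>K. scott_open S"
  then show "scott_open (\<Union>K)" unfolding scott_open_def by blast
qed

lemma openin_scott_topology: "openin (scott_topology :: 'a::order topology) = scott_open"
  unfolding scott_topology_def using istopology_scott_open topology_inverse' by blast

lemma way_below_imp_le: "way_below x y \<Longrightarrow> x \<le> y"
proof -
  assume "way_below x y"
  moreover have "directed_set {y}" "is_sup {y} y"
    by (simp_all add: directed_set_def is_sup_def)
  ultimately show "x \<le> y" unfolding way_below_def by blast
qed

lemma way_below_mono: "x \<le> x' \<Longrightarrow> way_below x' y \<Longrightarrow> y \<le> y' \<Longrightarrow> way_below x y'"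
  unfolding way_below_def by (meson order.trans)

context
  assumes domain: "continuous_domain TYPE('a::order)"
begin

lemma directed_set_way_below: "directed_set {z::'a. way_below z x}"
  using domain unfolding continuous_domain_def by blast

lemma is_sup_way_below: "is_sup {z::'a. way_below z x} x"
  using domain unfolding continuous_domain_def by blast

lemma directed_set_way_below_way_below:
  "directed_set {w::'a. \<exists>v. way_below w v \<and> way_below v y}"
  unfolding directed_set_def
proof (intro conjI ballI)
  obtain v where "way_below v y"
    using directed_set_way_below[of y] unfolding directed_set_def by auto
  moreover obtain w where "way_below w v"
    using directed_set_way_below[of v] unfolding directed_set_def by auto
  ultimately show "{w. \<exists>v. way_below w v \<and> way_below v y} \<noteq> {}" by auto
next
  fix w1 w2
  assume "w1 \<in> {w. \<exists>v. way_below w v \<and> way_below v y}"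
    and "w2 \<in> {w. \<exists>v. way_below w v \<and> way_below v y}"
  then obtain v1 v2 where w1: "way_below w1 v1" and v1: "way_below v1 y"
    and w2: "way_below w2 v2" and v2: "way_below v2 y"
    by blast
  obtain v where v: "way_below v y" "v1 \<le> v" "v2 \<le> v"
    using v1 v2 directed_set_way_below[of y] unfolding directed_set_def by blast
  have "way_below w1 v" "way_below w2 v"
    using way_below_mono[OF order.refl w1 v(2)] way_below_mono[OF order.refl w2 v(3)] .
  then obtain w where "way_below w v" "w1 \<le> w" "w2 \<le> w"
    using directed_set_way_below[of v] unfolding directed_set_def by blast
  then show "\<exists>w\<in>{w. \<exists>v. way_below w v \<and> way_below v y}. w1 \<le> w \<and> w2 \<le> w"
    using v(1) by blast
qed

lemma is_sup_way_below_way_below: "is_sup {w::'a. \<exists>v. way_below w v \<and> way_below v y} y"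
  unfolding is_sup_def
proof (intro conjI allI impI ballI)
  fix x assume "x \<in> {w. \<exists>v. way_below w v \<and> way_below v y}"
  then obtain v where "way_below x v" "way_below v y" by blast
  then show "x \<le> y" using way_below_imp_le order.trans by metis
next
  fix u assume u: "\<forall>x\<in>{w. \<exists>v. way_below w v \<and> way_below v y}. x \<le> u"
  have "v \<le> u" if v: "way_below v y" for v
  proof -
    have "x \<le> u" if "way_below x v" for x using u that v by blast
    with is_sup_way_below[of v] show "v \<le> u" unfolding is_sup_def by simp
  qed
  with is_sup_way_below[of y] show "y \<le> u" unfolding is_sup_def by simp
qed

lemma way_below_interpolate:
  assumes "way_below z (y::'a)"
  shows "\<exists>v. way_below z v \<and> way_below v y"
proof -
  obtain w where "z \<le> w" "\<exists>v. way_below w v \<and> way_below v y"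
    using assms directed_set_way_below_way_below[of y] is_sup_way_below_way_below[of y]
      order.refl[of y] unfolding way_below_def by blast
  then obtain v where "way_below w v" "way_below v y" by blast
  then show ?thesis using way_below_mono[OF \<open>z \<le> w\<close> \<open>way_below w v\<close> order.refl] by blast
qed

lemma scott_open_way_above: "scott_open {y::'a. way_below z y}"
  unfolding scott_open_def
proof (intro conjI allI impI)
  fix x y :: 'a assume "x \<in> {y. way_below z y} \<and> x \<le> y"
  then show "y \<in> {y. way_below z y}" using way_below_mono[OF order.refl] by blast
next
  fix S and s :: 'a assume S: "directed_set S \<and> is_sup S s \<and> s \<in> {y. way_below z y}"
  then obtain v where "way_below z v" "way_below v s" using way_below_interpolate by blast
  moreover from this S order.refl[of s] obtain t where "t \<in> S" "v \<le> t"
    unfolding way_below_def by blast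
  ultimately have "way_below z t" using way_below_mono[OF order.refl] by blast
  with \<open>t \<in> S\<close> show "S \<inter> {y. way_below z y} \<noteq> {}" by blast
qed

end

definition scott_approx :: "'a::order set \<Rightarrow> 'a set \<Rightarrow> bool" where
  "scott_approx U V \<longleftrightarrow> V \<noteq> {} \<and> (\<exists>x\<in>U. \<forall>y\<in>V. x \<le> y)"

lemma scott_approx_way_above:
  assumes "continuous_domain TYPE('a::order)" and "scott_open U" and "(x::'a) \<in> U"
  shows "\<exists>W. scott_open W \<and> x \<in> W \<and> scott_approx U W"
proof -
  obtain z where z: "way_below z x" "z \<in> U"
    using scott_open_meets_directed[OF assms(2) directed_set_way_below[OF assms(1)]
        is_sup_way_below[OF assms(1)] assms(3)] by blast
  have "scott_open {y. way_below z y}" using assms(1) by (rule scott_open_way_above)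
  moreover have "scott_approx U {y. way_below z y}"
    unfolding scott_approx_def using z way_below_imp_le by blast
  ultimately show ?thesis using z by blast
qed

lemma scott_approx_axioms:
  assumes "continuous_domain TYPE('a::order)"
  shows "approx_rel_axioms123 scott_topology {U::'a set. openin scott_topology U} scott_approx"
  unfolding approx_rel_axioms123_def openin_scott_topology
  using topological_basis_of_openin[of scott_topology] scott_approx_way_above[OF assms]
  by (auto simp: openin_scott_topology scott_approx_def dest: scott_open_upward)

lemma directed_set_range_Suc_mono:
  assumes "\<And>i. c i \<le> c (Suc i)"
  shows "directed_set (range c)"
  unfolding directed_set_def
proof (intro conjI ballI)
  fix x y assume "x \<in> range c" "y \<in> range c"
  then obtain i j where "x = c i" "y = c j" by blast
  moreover have "c i \<le> c (max i j)" "c j \<le> c (max i j)"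
    using assms by (auto intro: lift_Suc_mono_le)
  ultimately show "\<exists>z\<in>range c. x \<le> z \<and> y \<le> z" by blast
qed simp

lemma scott_approx_chain_converges:
  assumes "dcpo TYPE('a::order)" and open_chain: "\<And>i. scott_open (Us i :: 'a set)"
    and chain: "\<And>i. scott_approx (Us i) (Us (Suc i))"
  shows "\<exists>s. (\<forall>i. s \<in> Us i) \<and> (\<forall>V. scott_open V \<and> s \<in> V \<longrightarrow> (\<exists>i. Us i \<subseteq> V))"
proof -
  obtain c where c: "\<And>i. c i \<in> Us i" "\<And>i y. y \<in> Us (Suc i) \<Longrightarrow> c i \<le> y"
    using chain unfolding scott_approx_def by metis
  have "directed_set (range c)" using c by (intro directed_set_range_Suc_mono) blast
  then obtain s where s: "is_sup (range c) s" using assms(1) unfolding dcpo_def by blast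
  have "s \<in> Us i" for i
    using s c(1) open_chain scott_open_upward unfolding is_sup_def by blast
  moreover have "\<exists>i. Us i \<subseteq> V" if V: "scott_open V" "s \<in> V" for V
  proof -
    obtain i where "c i \<in> V"
      using scott_open_meets_directed[OF V(1) \<open>directed_set (range c)\<close> s V(2)] by blast
    then have "Us (Suc i) \<subseteq> V" using c(2) V(1) scott_open_upward by blast
    then show ?thesis by blast
  qed
  ultimately show ?thesis by blast
qed

lemma continuous_domain_convergent_approximation_space:
  assumes "continuous_domain TYPE('a::order)"
  shows "convergent_approximation_space (scott_topology :: 'a topology)"
proof (rule convergent_approximation_spaceI[OF scott_approx_axioms[OF assms]])
  have dcpo: "dcpo TYPE('a)" using assms unfolding continuous_domain_def by blast
  fix Us :: "nat \<Rightarrow> 'a set"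
  assume "\<And>i. Us i \<in> {U. openin scott_topology U}" and "\<And>i. scott_approx (Us i) (Us (Suc i))"
  then show "\<exists>x. (\<forall>i. x \<in> Us i) \<and> (\<forall>V. openin scott_topology V \<and> x \<in> V \<longrightarrow> (\<exists>i. Us i \<subseteq> V))"
    unfolding openin_scott_topology by (intro scott_approx_chain_converges[OF dcpo]) auto
qed

theorem proposition3p5:
  fixes X :: "'a topology"
  shows "(Polish_space X \<longrightarrow> convergent_approximation_space X) \<and>
         (continuous_domain TYPE('b::order) \<longrightarrow>
            convergent_approximation_space (scott_topology :: 'b topology))"
proof (intro conjI impI)
  assume "Polish_space X"
  then obtain M d where "Metric_space M d" "Metric_space.mcomplete M d"
      "X = Metric_space.mtopology M d"
    unfolding Polish_space_def completely_metrizable_space_def by blast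
  then show "convergent_approximation_space X"
    using Metric_space.mcomplete_convergent_approximation_space by blast
next
  assume "continuous_domain TYPE('b::order)"
  then show "convergent_approximation_space (scott_topology :: 'b topology)"
    by (rule continuous_domain_convergent_approximation_space)
qed

end
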